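(* Let $0<d<2$ and let $\{Q_m\}_{m=1}^{M}$ be a finite collection of dyadic squares in the plane $\mathbb{R}^2\cong\mathbb{C}$ satisfying (D) $4Q_m\cap 4Q_{m'}=\emptyset$ for all $m\neq m'$, and (P) there is a constant $C_P$ such that for every dyadic square $Q$ of the same dyadic lattice, $\sum_{Q_m\subset Q}\ell(Q_m)^{2-d}\le C_P\,\ell(Q)^{2-d}$. Let $X=\bigcup_{m=1}^M Q_m$, $\mu=\sum_{m=1}^M \ell(Q_m)^{-d}\, m_2|_{Q_m}$, and define for $x,y\in X$ $$K'(x,y)=\begin{cases}0, & \text{if } x,y \text{ lie in the same square } Q_i,\\ \dfrac{\ell(Q_j)^d}{(x-y)^2}, & \text{if } y\in Q_i,\ x\in Q_j,\ i\neq j,\end{cases}$$ (points of the plane viewed as complex numbers). Define the maximal operator $$M_{\mu,3}f(x)=\sup_{R>0}\frac{1}{\mu(B(x,3R))}\int_{B(x,R)}|f(y)|\,d\mu(y).$$ Then there is a constant $C$ (independent of $f$ and $x$) such that for every $\mu$-measurable function $f$ on $X$ and every $x\in X$, $$\Big|\int_X K'(x,y)f(y)\,d\mu(y)\Big|\le \int_X |K'(x,y)|\,|f(y)|\,d\mu(y)\le C\,M_{\mu,3}f(x),$$ i.e. the operator $f\mapsto\int_X K'(x,y)f(y)\,d\mu(y)$ is pointwise majorized by $C\,M_{\mu,3}f$.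
   Context: $\ell(Q)$ denotes the side length of a square $Q$; $4Q$ is the square with the same center as $Q$ and side length $4\ell(Q)$; $m_2$ is two-dimensional Lebesgue measure and $m_2|_{Q}$ its restriction to $Q$. $B(x,R)$ denotes the Euclidean disc of center $x$ and radius $R$ (intersected with $X$, where $\mu$ lives). *)

theory Defs
  imports "HOL-Analysis.Analysis"
begin

text \<open>Dyadic squares of the standard dyadic lattice in the plane (identified with complex),
  indexed by (k, j, l): the half-open square [j 2^k, (j+1) 2^k) x [l 2^k, (l+1) 2^k).\<close>

definition dside :: "int \<times> int \<times> int \<Rightarrow> real" where
  "dside Q = (case Q of (k, j, l) \<Rightarrow> (2::real) powr (real_of_int k))"

definition dsq :: "int \<times> int \<times> int \<Rightarrow> complex set" where
  "dsq Q = (case Q of (k, j, l) \<Rightarrow>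
     {z. real_of_int j * dside Q \<le> Re z \<and> Re z < (real_of_int j + 1) * dside Q \<and>
         real_of_int l * dside Q \<le> Im z \<and> Im z < (real_of_int l + 1) * dside Q})"

text \<open>4Q: same center, side length 4 l(Q).\<close>
definition dsq4 :: "int \<times> int \<times> int \<Rightarrow> complex set" where
  "dsq4 Q = (case Q of (k, j, l) \<Rightarrow>
     {z. (real_of_int j + 1/2 - 2) * dside Q \<le> Re z \<and> Re z < (real_of_int j + 1/2 + 2) * dside Q \<and>
         (real_of_int l + 1/2 - 2) * dside Q \<le> Im z \<and> Im z < (real_of_int l + 1/2 + 2) * dside Q})"

definition dmu :: "real \<Rightarrow> nat \<Rightarrow> (nat \<Rightarrow> int \<times> int \<times> int) \<Rightarrow> complex measure" where
  "dmu d M q = density lebesgue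
     (\<lambda>z. \<Sum>m\<in>{1..M}. ennreal (dside (q m) powr (- d)) * indicator (dsq (q m)) z)"

text \<open>The kernel K'(x,y): 0 if x,y in the same square (or outside X),
  l(Q_j)^d / (x-y)^2 if y in Q_i, x in Q_j, i \<noteq> j.\<close>
definition Kp :: "real \<Rightarrow> nat \<Rightarrow> (nat \<Rightarrow> int \<times> int \<times> int) \<Rightarrow> complex \<Rightarrow> complex \<Rightarrow> complex" where
  "Kp d M q x y = (\<Sum>i\<in>{1..M}. \<Sum>j\<in>{1..M}.
     if i \<noteq> j \<and> y \<in> dsq (q i) \<and> x \<in> dsq (q j)
     then complex_of_real (dside (q j) powr d) / (x - y)^2 else 0)"

definition maxfn3 :: "complex measure \<Rightarrow> (complex \<Rightarrow> complex) \<Rightarrow> complex \<Rightarrow> ennreal" where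
  "maxfn3 \<mu> f x = (SUP R\<in>{0<..}. (\<integral>\<^sup>+ y\<in>ball x R. ennreal (cmod (f y)) \<partial>\<mu>) / emeasure \<mu> (ball x (3 * R)))"

end

theory Submission
  imports Defs
begin

text \<open>Fix \<open>x \<in> Q\<^sub>j\<close>. The kernel vanishes unless \<open>y \<notin> 4Q\<^sub>j\<close>, so \<open>|x - y| \<ge> \<ell>(Q\<^sub>j)\<close>, and on the
  dyadic annulus \<open>\<ell>(Q\<^sub>j) 2\<^sup>n \<le> |x - y| < \<ell>(Q\<^sub>j) 2\<^sup>n\<^sup>+\<^sup>1\<close> it is at most \<open>\<ell>(Q\<^sub>j)\<^sup>d\<^sup>-\<^sup>2 4\<^sup>-\<^sup>n\<close>.
  On the other hand \<open>\<mu>\<close> has growth of degree \<open>2 - d\<close>: a ball of radius \<open>r\<close> meets at most one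
  square larger than \<open>r\<close>, which contributes \<open>\<lesssim> r\<^sup>-\<^sup>d r\<^sup>2\<close>, while the smaller squares meeting it lie in
  nine dyadic squares of side \<open>\<le> 2r\<close>, so the packing condition (P) bounds their total mass by
  \<open>\<lesssim> r\<^sup>2\<^sup>-\<^sup>d\<close>. Hence the \<open>n\<close>-th annulus contributes at most
  \<open>\<ell>(Q\<^sub>j)\<^sup>d\<^sup>-\<^sup>2 4\<^sup>-\<^sup>n \<mu>(B(x, 3\<ell>(Q\<^sub>j) 2\<^sup>n\<^sup>+\<^sup>1)) M\<^sub>\<mu>\<^sub>,\<^sub>3f(x) \<lesssim> 2\<^sup>-\<^sup>d\<^sup>n M\<^sub>\<mu>\<^sub>,\<^sub>3f(x)\<close>, a geometric series.\<close>

lemma dside_pos: "dside Q > 0"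
  by (cases Q) (simp add: dside_def)

lemma mem_dsq_iff: "z \<in> dsq (k,j,l) \<longleftrightarrow>
   real_of_int j * dside (k,j,l) \<le> Re z \<and> Re z < (real_of_int j + 1) * dside (k,j,l) \<and>
   real_of_int l * dside (k,j,l) \<le> Im z \<and> Im z < (real_of_int l + 1) * dside (k,j,l)"
  by (simp add: dsq_def)

lemma mem_dsq4_iff: "z \<in> dsq4 (k,j,l) \<longleftrightarrow>
   (real_of_int j + 1/2 - 2) * dside (k,j,l) \<le> Re z \<and> Re z < (real_of_int j + 1/2 + 2) * dside (k,j,l) \<and>
   (real_of_int l + 1/2 - 2) * dside (k,j,l) \<le> Im z \<and> Im z < (real_of_int l + 1/2 + 2) * dside (k,j,l)"
  by (simp add: dsq4_def)

lemma dsq_subset_dsq4: "dsq Q \<subseteq> dsq4 Q"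
proof (cases Q)
  case (fields k j l)
  show ?thesis
    unfolding fields using dside_pos[of "(k,j,l)"] by (auto simp: mem_dsq_iff mem_dsq4_iff algebra_simps)
qed

lemma dside_le_dist_if_notin_dsq4:
  assumes "x \<in> dsq Q" "y \<notin> dsq4 Q"
  shows "dside Q \<le> cmod (x - y)"
proof (cases Q)
  case (fields k j l)
  define s where "s = dside (k,j,l)"
  have s: "s > 0" unfolding s_def by (rule dside_pos)
  have x: "real_of_int j * s \<le> Re x" "Re x < (real_of_int j + 1) * s"
    "real_of_int l * s \<le> Im x" "Im x < (real_of_int l + 1) * s"
    using assms(1) unfolding fields mem_dsq_iff s_def by auto
  have y: "\<not> ((real_of_int j + 1/2 - 2) * s \<le> Re y \<and> Re y < (real_of_int j + 1/2 + 2) * s \<and>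
      (real_of_int l + 1/2 - 2) * s \<le> Im y \<and> Im y < (real_of_int l + 1/2 + 2) * s)"
    using assms(2) unfolding fields mem_dsq4_iff s_def by auto
  have "s \<le> \<bar>Re x - Re y\<bar> \<or> s \<le> \<bar>Im x - Im y\<bar>"
    using x y s by (auto simp: algebra_simps)
  then show ?thesis
    using abs_Re_le_cmod[of "x - y"] abs_Im_le_cmod[of "x - y"] unfolding fields s_def by auto
qed

lemma mem_dsq4_if_dist_less:
  assumes "y \<in> dsq Q" "cmod (y - x) < dside Q"
  shows "x \<in> dsq4 Q"
  using dside_le_dist_if_notin_dsq4[OF assms(1)] assms(2) by (metis not_le)

lemma sets_dsq [measurable]: "dsq Q \<in> sets borel"
proof -
  obtain k j l where Q: "Q = (k,j,l)" by (cases Q)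
  have "dsq Q = {z. real_of_int j * dside Q \<le> Re z} \<inter> {z. Re z < (real_of_int j + 1) * dside Q} \<inter>
      {z. real_of_int l * dside Q \<le> Im z} \<inter> {z. Im z < (real_of_int l + 1) * dside Q}"
    unfolding Q by (auto simp: mem_dsq_iff)
  also have "\<dots> \<in> sets borel" by measurable
  finally show ?thesis .
qed

lemma sets_dsq_lebesgue [measurable]: "dsq Q \<in> sets lebesgue"
  by (simp add: sets_completionI_sets)

lemma sets_dmu [simp, measurable_cong]: "sets (dmu d M q) = sets lebesgue"
  by (simp add: dmu_def)

lemma emeasure_dmu:
  assumes "A \<in> sets lebesgue"
  shows "emeasure (dmu d M q) A =
    (\<Sum>m\<in>{1..M}. ennreal (dside (q m) powr (- d)) * emeasure lebesgue (dsq (q m) \<inter> A))"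
proof -
  have "emeasure (dmu d M q) A = (\<integral>\<^sup>+ z. (\<Sum>m\<in>{1..M}. ennreal (dside (q m) powr (- d)) *
      indicator (dsq (q m)) z) * indicator A z \<partial>lebesgue)"
    unfolding dmu_def using assms by (intro emeasure_density) measurable
  also have "\<dots> = (\<integral>\<^sup>+ z. (\<Sum>m\<in>{1..M}. ennreal (dside (q m) powr (- d)) *
      indicator (dsq (q m) \<inter> A) z) \<partial>lebesgue)"
    by (intro nn_integral_cong) (simp only: sum_distrib_right indicator_inter_arith mult.assoc)
  also have "\<dots> = (\<Sum>m\<in>{1..M}. ennreal (dside (q m) powr (- d)) * emeasure lebesgue (dsq (q m) \<inter> A))"
    using assms by (subst nn_integral_sum) (auto simp: nn_integral_cmult_indicator)
  finally show ?thesis .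
qed

lemma emeasure_lebesgue_le_if_subset_square:
  assumes "r \<ge> 0" "S \<subseteq> cbox a (a + complex_of_real r * (1 + \<i>))"
  shows "emeasure lebesgue S \<le> ennreal (r\<^sup>2)"
proof -
  have "emeasure lebesgue S \<le> emeasure lebesgue (cbox a (a + complex_of_real r * (1 + \<i>)))"
    by (rule emeasure_mono[OF assms(2)]) simp
  also have "\<dots> = ennreal (r\<^sup>2)"
    using assms(1) by (simp add: emeasure_lborel_cbox_eq Basis_complex_def power2_eq_square)
  finally show ?thesis .
qed

lemma emeasure_lebesgue_ball_Int_le:
  assumes "r \<ge> 0"
  shows "emeasure lebesgue (ball (x::complex) r \<inter> S) \<le> ennreal (4 * r\<^sup>2)"
proof -
  define a where "a = x - complex_of_real r * (1 + \<i>)"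
  have "ball x r \<inter> S \<subseteq> cbox a (a + complex_of_real (2*r) * (1 + \<i>))"
  proof
    fix z assume "z \<in> ball x r \<inter> S"
    then have "cmod (x - z) < r" by (auto simp: dist_norm)
    then have "\<bar>Re x - Re z\<bar> < r" "\<bar>Im x - Im z\<bar> < r"
      using abs_Re_le_cmod[of "x - z"] abs_Im_le_cmod[of "x - z"] by auto
    then show "z \<in> cbox a (a + complex_of_real (2*r) * (1 + \<i>))"
      by (auto simp: a_def mem_box Basis_complex_def)
  qed
  from emeasure_lebesgue_le_if_subset_square[OF _ this] assms show ?thesis
    by (simp add: power_mult_distrib)
qed

lemma emeasure_lebesgue_dsq_Int_le: "emeasure lebesgue (dsq Q \<inter> S) \<le> ennreal (dside Q powr 2)"
proof -
  obtain k j l where Q: "Q = (k,j,l)" by (cases Q)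
  define s where "s = dside Q"
  have s: "s > 0" unfolding s_def by (rule dside_pos)
  define a where "a = Complex (real_of_int j * s) (real_of_int l * s)"
  have "dsq Q \<inter> S \<subseteq> cbox a (a + complex_of_real s * (1 + \<i>))"
    unfolding Q s_def a_def by (auto simp: mem_box Basis_complex_def mem_dsq_iff algebra_simps)
  from emeasure_lebesgue_le_if_subset_square[OF _ this] s show ?thesis
    by (simp add: s_def powr_realpow)
qed

lemma weighted_emeasure_dsq_Int_le:
  "ennreal (dside Q powr (- d)) * emeasure lebesgue (dsq Q \<inter> S) \<le> ennreal (dside Q powr (2 - d))"
proof -
  have "ennreal (dside Q powr (- d)) * emeasure lebesgue (dsq Q \<inter> S)
      \<le> ennreal (dside Q powr (- d)) * ennreal (dside Q powr 2)"
    by (intro mult_left_mono emeasure_lebesgue_dsq_Int_le zero_le)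
  also have "\<dots> = ennreal (dside Q powr (2 - d))"
    using dside_pos powr_add[of "dside Q" "- d" 2] by (simp add: ennreal_mult'[symmetric])
  finally show ?thesis .
qed

lemma weighted_emeasure_large_dsq_Int_ball_le:
  assumes "0 \<le> d" "0 < r" "r < dside Q"
  shows "ennreal (dside Q powr (- d)) * emeasure lebesgue (dsq Q \<inter> ball x r) \<le> ennreal (4 * r powr (2 - d))"
proof -
  have "dside Q powr (- d) \<le> r powr (- d)"
    using assms by (intro powr_mono2') auto
  then have "ennreal (dside Q powr (- d)) * emeasure lebesgue (dsq Q \<inter> ball x r)
      \<le> ennreal (r powr (- d)) * ennreal (4 * r\<^sup>2)"
    using emeasure_lebesgue_ball_Int_le[of r x "dsq Q"] assms(2)
    by (intro mult_mono) (auto simp: Int_commute ennreal_leI)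
  also have "\<dots> = ennreal (4 * r powr (2 - d))"
    using assms(2) by (simp add: ennreal_mult'[symmetric] powr_diff powr_minus powr_realpow field_simps)
  finally show ?thesis .
qed

lemma sum_UN_le:
  fixes h :: "'a \<Rightarrow> real"
  assumes "finite I" "\<And>i. i \<in> I \<Longrightarrow> finite (T i)" "\<And>x. h x \<ge> 0"
  shows "sum h (\<Union>i\<in>I. T i) \<le> (\<Sum>i\<in>I. sum h (T i))"
  using assms
proof (induction I rule: finite_induct)
  case empty
  then show ?case by simp
next
  case (insert i I)
  have "finite (\<Union>i\<in>I. T i)"
    using insert by auto
  then have "sum h (\<Union>i\<in>insert i I. T i) \<le> sum h (T i) + sum h (\<Union>i\<in>I. T i)"
    using sum_Un[of "T i" "\<Union>i\<in>I. T i" h] sum_nonneg[of "T i \<inter> (\<Union>i\<in>I. T i)" h] insert.prems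
    by auto
  also have "\<dots> \<le> sum h (T i) + (\<Sum>i\<in>I. sum h (T i))"
    using insert by auto
  finally show ?case
    using insert by simp
qed

lemma dyadic_interval_subset_ancestor:
  fixes s t :: real and i :: int and e :: nat
  assumes s: "s > 0" and t: "real_of_int i * s \<le> t" "t < (real_of_int i + 1) * s"
  defines "a \<equiv> s * 2^e"
  shows "real_of_int \<lfloor>t / a\<rfloor> * a \<le> real_of_int i * s \<and> (real_of_int i + 1) * s \<le> (real_of_int \<lfloor>t / a\<rfloor> + 1) * a"
proof -
  define J where "J = \<lfloor>t / a\<rfloor>"
  have a: "a > 0" using s by (simp add: a_def)
  have "real_of_int J \<le> t / a" "t / a < real_of_int J + 1"
    unfolding J_def by linarith+
  then have J: "real_of_int J * a \<le> t" "t < (real_of_int J + 1) * a"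
    using a by (simp_all add: field_simps)
  have "real_of_int J * 2^e * s < (real_of_int i + 1) * s"
    using J(1) t(2) by (simp add: a_def algebra_simps)
  then have "real_of_int (J * 2^e) < real_of_int (i + 1)"
    using s by simp
  then have "J * 2^e \<le> i"
    by linarith
  then have "real_of_int (J * 2^e) \<le> real_of_int i"
    by (simp only: of_int_le_iff)
  then have lower: "real_of_int J * a \<le> real_of_int i * s"
    using s mult_right_mono[of "real_of_int (J * 2^e)" "real_of_int i" s] by (simp add: a_def mult_ac)
  have "real_of_int i * s < (real_of_int J + 1) * 2^e * s"
    using J(2) t(1) by (simp add: a_def algebra_simps)
  then have "real_of_int i < real_of_int ((J + 1) * 2^e)"
    using s by simp
  then have "i + 1 \<le> (J + 1) * 2^e"
    by linarith
  then have "real_of_int (i + 1) \<le> real_of_int ((J + 1) * 2^e)"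
    by (simp only: of_int_le_iff)
  then have upper: "(real_of_int i + 1) * s \<le> (real_of_int J + 1) * a"
    using s mult_right_mono[of "real_of_int (i + 1)" "real_of_int ((J + 1) * 2^e)" s]
    by (simp add: a_def mult_ac)
  show ?thesis
    using lower upper unfolding J_def by blast
qed

lemma dsq_subset_ancestor:
  assumes "dside Q \<le> 2 powr real_of_int k" "y \<in> dsq Q"
  shows "dsq Q \<subseteq> dsq (k, \<lfloor>Re y / 2 powr real_of_int k\<rfloor>, \<lfloor>Im y / 2 powr real_of_int k\<rfloor>)"
proof -
  obtain k' j l where Q: "Q = (k',j,l)" by (cases Q)
  define s where "s = dside Q"
  have s: "s > 0" unfolding s_def by (rule dside_pos)
  have s_eq: "s = 2 powr real_of_int k'" unfolding s_def Q dside_def by simp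
  have "k' \<le> k" using assms(1) unfolding s_def[symmetric] s_eq by simp
  define e where "e = nat (k - k')"
  have a: "2 powr real_of_int k = s * 2^e"
  proof -
    have "2 powr real_of_int k = 2 powr (real_of_int k' + real e)"
      using \<open>k' \<le> k\<close> unfolding e_def by simp
    then show ?thesis unfolding s_eq by (simp add: powr_add powr_realpow)
  qed
  have y: "real_of_int j * s \<le> Re y" "Re y < (real_of_int j + 1) * s"
    "real_of_int l * s \<le> Im y" "Im y < (real_of_int l + 1) * s"
    using assms(2) unfolding Q mem_dsq_iff s_def by auto
  note Re_nested = dyadic_interval_subset_ancestor[OF s y(1,2), of e]
    and Im_nested = dyadic_interval_subset_ancestor[OF s y(3,4), of e]
  show ?thesis
  proof
    fix z assume "z \<in> dsq Q"
    then have "real_of_int j * s \<le> Re z" "Re z < (real_of_int j + 1) * s"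
      "real_of_int l * s \<le> Im z" "Im z < (real_of_int l + 1) * s"
      unfolding Q mem_dsq_iff s_def by auto
    then show "z \<in> dsq (k, \<lfloor>Re y / 2 powr real_of_int k\<rfloor>, \<lfloor>Im y / 2 powr real_of_int k\<rfloor>)"
      unfolding mem_dsq_iff dside_def using a Re_nested Im_nested by simp
  qed
qed

lemma dsq_near_subset_neighbour_ancestor:
  fixes k :: int and x y :: complex
  defines "a \<equiv> 2 powr real_of_int k"
  assumes "dside Q \<le> a" "y \<in> dsq Q" "dist x y < a"
  shows "\<exists>u\<in>{-1..1}. \<exists>v\<in>{-1..1}. dsq Q \<subseteq> dsq (k, \<lfloor>Re x / a\<rfloor> + u, \<lfloor>Im x / a\<rfloor> + v)"
proof -
  have "a > 0"
    unfolding a_def by simp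
  have "\<bar>Re y / a - Re x / a\<bar> < 1" "\<bar>Im y / a - Im x / a\<bar> < 1"
    using abs_Re_le_cmod[of "x - y"] abs_Im_le_cmod[of "x - y"] assms(4) \<open>a > 0\<close>
    by (simp_all add: dist_norm diff_divide_distrib[symmetric] abs_minus_commute)
  then have "\<lfloor>Re y / a\<rfloor> - \<lfloor>Re x / a\<rfloor> \<in> {-1..1}" "\<lfloor>Im y / a\<rfloor> - \<lfloor>Im x / a\<rfloor> \<in> {-1..1}"
    by (simp_all; linarith)+
  moreover have "dsq Q \<subseteq> dsq (k, \<lfloor>Re x / a\<rfloor> + (\<lfloor>Re y / a\<rfloor> - \<lfloor>Re x / a\<rfloor>),
      \<lfloor>Im x / a\<rfloor> + (\<lfloor>Im y / a\<rfloor> - \<lfloor>Im x / a\<rfloor>))"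
    using dsq_subset_ancestor[OF assms(2,3)[unfolded a_def]] unfolding a_def by simp
  ultimately show ?thesis
    by (intro bexI)
qed

lemma exists_dyadic_scale:
  fixes r :: real
  assumes "r > 0"
  obtains k :: int where "r \<le> 2 powr real_of_int k" "2 powr real_of_int k \<le> 2 * r"
proof
  have "r = 2 powr log 2 r"
    using assms by simp
  also have "\<dots> \<le> 2 powr real_of_int \<lceil>log 2 r\<rceil>"
    by (intro powr_mono) auto
  finally show "r \<le> 2 powr real_of_int \<lceil>log 2 r\<rceil>" .
  have "2 powr real_of_int \<lceil>log 2 r\<rceil> \<le> 2 powr (log 2 r + 1)"
    by (intro powr_mono) linarith+
  also have "\<dots> = 2 * r"
    using assms by (simp add: powr_add)
  finally show "2 powr real_of_int \<lceil>log 2 r\<rceil> \<le> 2 * r" .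
qed

lemma exists_dyadic_annulus:
  fixes l r :: real
  assumes "0 < l" "l \<le> r"
  obtains n :: nat where "l * 2^n \<le> r" "r < l * 2^(n+1)"
proof
  define n where "n = nat \<lfloor>log 2 (r / l)\<rfloor>"
  have ratio: "r / l \<ge> 1"
    using assms by simp
  then have log_nonneg: "log 2 (r / l) \<ge> 0"
    by simp
  have "2^n = 2 powr real n"
    by (simp add: powr_realpow)
  also have "\<dots> \<le> 2 powr log 2 (r / l)"
    unfolding n_def using log_nonneg by (intro powr_mono) auto
  also have "\<dots> = r / l"
    using ratio by simp
  finally show "l * 2^n \<le> r"
    using assms(1) by (simp add: field_simps)
  have "r / l = 2 powr log 2 (r / l)"
    using ratio by simp
  also have "\<dots> < 2 powr real (n+1)"
    unfolding n_def using log_nonneg by (intro powr_less_mono) linarith+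
  also have "\<dots> = 2^(n+1)"
    by (rule powr_realpow) simp
  finally show "r < l * 2^(n+1)"
    using assms(1) by (simp add: field_simps)
qed

lemma nn_integral_ball_le_maxfn3:
  fixes \<mu> :: "complex measure"
  assumes R: "R > 0" and finite: "emeasure \<mu> (ball x (3 * R)) < \<infinity>"
    and sets: "ball x R \<in> sets \<mu>" "ball x (3 * R) \<in> sets \<mu>"
  shows "(\<integral>\<^sup>+ y\<in>ball x R. ennreal (cmod (f y)) \<partial>\<mu>) \<le> emeasure \<mu> (ball x (3 * R)) * maxfn3 \<mu> f x"
proof -
  define a where "a = (\<integral>\<^sup>+ y\<in>ball x R. ennreal (cmod (f y)) \<partial>\<mu>)"
  define b where "b = emeasure \<mu> (ball x (3 * R))"
  have ratio: "a / b \<le> maxfn3 \<mu> f x"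
    unfolding maxfn3_def a_def b_def by (rule SUP_upper2[of R]) (use R in auto)
  show ?thesis
  proof (cases "b = 0")
    case True
    have "ball x R \<subseteq> ball x (3 * R)"
      using R by (intro subset_ball) auto
    then have "emeasure \<mu> (ball x R) \<le> b"
      unfolding b_def by (intro emeasure_mono sets(2))
    then have "ball x R \<in> null_sets \<mu>"
      using True sets(1) by auto
    then have "a = 0"
      unfolding a_def by (rule nn_integral_null_set)
    then show ?thesis
      unfolding a_def by simp
  next
    case False
    have "a = a / b * b"
      using False finite unfolding b_def[symmetric] by (simp add: ennreal_divide_times)
    also have "\<dots> \<le> maxfn3 \<mu> f x * b"
      using ratio by (intro mult_right_mono) auto
    finally show ?thesis
      unfolding a_def b_def by (simp add: mult.commute)
  qed
qed

lemma norm_integral_le_nn_integral_norm: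
  fixes f :: "'a \<Rightarrow> 'b::{banach, second_countable_topology}"
  shows "ennreal (norm (integral\<^sup>L M f)) \<le> (\<integral>\<^sup>+ x. ennreal (norm (f x)) \<partial>M)"
proof (cases "integrable M f")
  case True
  then show ?thesis
    by (rule integral_norm_bound_ennreal)
next
  case False
  then show ?thesis
    by (simp add: not_integrable_integral_eq)
qed

lemma suminf_ennreal_geometric:
  fixes a r :: real
  assumes "a \<ge> 0" "0 \<le> r" "r < 1"
  shows "(\<Sum>n. ennreal (a * r^n)) = ennreal (a / (1 - r))"
proof -
  have r: "norm r < 1"
    using assms by simp
  have "(\<Sum>n. ennreal (a * r^n)) = ennreal (\<Sum>n. a * r^n)"
    using assms by (intro suminf_ennreal2 summable_mult summable_geometric[OF r]) auto
  also have "(\<Sum>n. a * r^n) = a / (1 - r)"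
    using suminf_mult[OF summable_geometric[OF r], of a] suminf_geometric[OF r] by simp
  finally show ?thesis .
qed

lemma powr_div_square_le_annulus:
  fixes l \<rho> d :: real
  assumes l: "0 < l" and \<rho>: "l * 2^n \<le> \<rho>"
  shows "l powr d / \<rho>\<^sup>2 \<le> l powr (d - 2) * (1/4)^n"
proof -
  have "0 < l * 2^n"
    using l by simp
  then have "l powr d / \<rho>\<^sup>2 \<le> l powr d / (l * 2^n)\<^sup>2"
    using \<rho> by (intro divide_left_mono power_mono mult_pos_pos) auto
  also have "((2::real)^n)\<^sup>2 = 4^n"
    by (simp add: power2_eq_square flip: power_mult_distrib)
  then have "(l * 2^n)\<^sup>2 = l powr 2 * 4^n"
    using l by (simp add: power_mult_distrib powr_realpow)
  then have "l powr d / (l * 2^n)\<^sup>2 = l powr (d - 2) * (1/4)^n"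
    using l by (simp add: powr_diff power_one_over divide_simps)
  finally show ?thesis .
qed

lemma annulus_weight_eq:
  fixes l K d :: real
  assumes l: "l > 0"
  shows "l powr (d - 2) * (1/4)^n * (K * (3 * (l * 2^(n+1))) powr (2 - d))
           = K * 6 powr (2 - d) * (2 powr (- d))^n"
proof -
  have "((2::real)^n) powr (2 - d) = 2 powr (real n * (2 - d))"
    by (subst powr_realpow[of 2 n, symmetric]) (simp_all add: powr_powr)
  also have "\<dots> = (2 powr (2 - d))^n"
    by (subst powr_power) (simp_all add: mult.commute)
  finally have "(3 * (l * 2^(n+1))) powr (2 - d) = 6 powr (2 - d) * l powr (2 - d) * (2 powr (2 - d))^n"
    using l by (simp add: powr_mult)
  then have "l powr (d - 2) * (1/4)^n * (K * (3 * (l * 2^(n+1))) powr (2 - d))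
      = K * 6 powr (2 - d) * (l powr (d - 2) * l powr (2 - d)) * (1/4 * 2 powr (2 - d))^n"
    by (simp only: power_mult_distrib mult_ac)
  also have "l powr (d - 2) * l powr (2 - d) = 1"
    using l by (simp add: powr_add[symmetric])
  also have "1/4 * 2 powr (2 - d) = (2::real) powr (- d)"
    using powr_add[of 2 2 "- d"] by simp
  finally show ?thesis
    by simp
qed

text \<open>The growth constant of \<open>\<mu>\<close> on balls: \<open>4\<close> accounts for the one square larger than the radius,
  \<open>9 |C\<^sub>P| 2\<^sup>2\<^sup>-\<^sup>d\<close> for the smaller ones.\<close>
definition ball_growth_const :: "real \<Rightarrow> real \<Rightarrow> real" where
  "ball_growth_const d C_P = 4 + 9 * \<bar>C_P\<bar> * 2 powr (2 - d)"

lemma ball_growth_const_nonneg: "ball_growth_const d C_P \<ge> 0"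
  by (simp add: ball_growth_const_def)

locale separated_dyadic_squares =
  fixes d C_P :: real and M :: nat and q :: "nat \<Rightarrow> int \<times> int \<times> int"
  assumes d_pos: "0 < d" and d_less_2: "d < 2"
    and separated: "\<And>m m'. m \<in> {1..M} \<Longrightarrow> m' \<in> {1..M} \<Longrightarrow> m \<noteq> m' \<Longrightarrow> dsq4 (q m) \<inter> dsq4 (q m') = {}"
    and packing: "\<And>Q. (\<Sum>m\<in>{m\<in>{1..M}. dsq (q m) \<subseteq> dsq Q}. dside (q m) powr (2 - d))
                        \<le> C_P * dside Q powr (2 - d)"
begin

abbreviation \<mu> :: "complex measure" where
  "\<mu> \<equiv> dmu d M q"

lemma square_index_unique:
  assumes "m \<in> {1..M}" "m' \<in> {1..M}" "z \<in> dsq (q m)" "z \<in> dsq (q m')"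
  shows "m = m'"
  using assms separated dsq_subset_dsq4[of "q m"] dsq_subset_dsq4[of "q m'"] by blast

lemma large_square_meeting_ball_unique:
  assumes "m \<in> {1..M}" "m' \<in> {1..M}" "r < dside (q m)" "r < dside (q m')"
    and "dsq (q m) \<inter> ball x r \<noteq> {}" "dsq (q m') \<inter> ball x r \<noteq> {}"
  shows "m = m'"
proof -
  have "x \<in> dsq4 (q i)" if "r < dside (q i)" "dsq (q i) \<inter> ball x r \<noteq> {}" for i
  proof -
    from that(2) obtain y where "y \<in> dsq (q i)" "cmod (y - x) < r"
      by (auto simp: dist_norm norm_minus_commute)
    with that(1) show ?thesis
      by (intro mem_dsq4_if_dist_less) auto
  qed
  then show ?thesis
    using assms separated by blast
qed

text \<open>The small squares meeting \<open>B(x, r)\<close> lie in the nine dyadic squares of side \<open>2\<^sup>k \<in> [r, 2r]\<close>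
  around \<open>x\<close>, to each of which the packing condition applies.\<close>
lemma small_squares_meeting_ball_sum_le:
  assumes r: "r > 0"
  shows "(\<Sum>m\<in>{m\<in>{1..M}. dside (q m) \<le> r \<and> dsq (q m) \<inter> ball x r \<noteq> {}}. dside (q m) powr (2 - d))
           \<le> 9 * \<bar>C_P\<bar> * (2 * r) powr (2 - d)"
proof -
  obtain k where ra: "r \<le> 2 powr real_of_int k" and ar: "2 powr real_of_int k \<le> 2 * r"
    using exists_dyadic_scale[OF r] .
  define a where "a = 2 powr real_of_int k"
  have a: "a > 0"
    unfolding a_def by simp
  define Par where "Par = (\<lambda>(u, v). (k, \<lfloor>Re x / a\<rfloor> + u, \<lfloor>Im x / a\<rfloor> + v)) ` ({-1..1} \<times> {-1..1})"
  define T where "T P = {m\<in>{1..M}. dsq (q m) \<subseteq> dsq P}" for P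
  define S where "S = {m\<in>{1..M}. dside (q m) \<le> r \<and> dsq (q m) \<inter> ball x r \<noteq> {}}"
  define h where "h m = dside (q m) powr (2 - d)" for m
  have card_Par: "card Par \<le> 9"
    using card_image_le[of "{-1..1::int} \<times> {-1..1::int}"] unfolding Par_def
    by (simp add: card_cartesian_product)
  have S_covered: "S \<subseteq> (\<Union>P\<in>Par. T P)"
  proof
    fix m assume m: "m \<in> S"
    then obtain y where "y \<in> dsq (q m)" "dist x y < r"
      unfolding S_def by auto
    with ra m have "\<exists>u\<in>{-1..1}. \<exists>v\<in>{-1..1}. dsq (q m) \<subseteq> dsq (k, \<lfloor>Re x / a\<rfloor> + u, \<lfloor>Im x / a\<rfloor> + v)"
      unfolding a_def S_def by (intro dsq_near_subset_neighbour_ancestor) auto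
    then obtain u v where "u \<in> {-1..1}" "v \<in> {-1..1}"
      and "dsq (q m) \<subseteq> dsq (k, \<lfloor>Re x / a\<rfloor> + u, \<lfloor>Im x / a\<rfloor> + v)"
      by blast
    moreover from this(1,2) have "(k, \<lfloor>Re x / a\<rfloor> + u, \<lfloor>Im x / a\<rfloor> + v) \<in> Par"
      unfolding Par_def by (intro image_eqI[of _ _ "(u, v)"]) auto
    ultimately show "m \<in> (\<Union>P\<in>Par. T P)"
      using m unfolding T_def S_def by blast
  qed
  have "sum h S \<le> sum h (\<Union>P\<in>Par. T P)"
    by (rule sum_mono2[OF _ S_covered]) (auto simp: Par_def T_def h_def)
  also have "\<dots> \<le> (\<Sum>P\<in>Par. sum h (T P))"
    by (rule sum_UN_le) (auto simp: Par_def T_def h_def)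
  also have "\<dots> \<le> (\<Sum>P\<in>Par. \<bar>C_P\<bar> * a powr (2 - d))"
  proof (rule sum_mono)
    fix P assume "P \<in> Par"
    then have "dside P = a"
      unfolding Par_def a_def by (auto simp: dside_def)
    then show "sum h (T P) \<le> \<bar>C_P\<bar> * a powr (2 - d)"
      using packing[of P] unfolding T_def h_def by (smt (verit) mult_right_mono powr_ge_zero)
  qed
  also have "\<dots> \<le> 9 * (\<bar>C_P\<bar> * (2 * r) powr (2 - d))"
    using card_Par a ar d_less_2 unfolding a_def
    by (auto intro!: mult_mono mult_left_mono powr_mono2)
  finally show ?thesis
    unfolding S_def h_def by simp
qed

lemma sum_large_squares_meeting_ball_le:
  assumes r: "r > 0"
  shows "(\<Sum>m\<in>{m\<in>{1..M}. r < dside (q m) \<and> dsq (q m) \<inter> ball x r \<noteq> {}}.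
           ennreal (dside (q m) powr (- d)) * emeasure lebesgue (dsq (q m) \<inter> ball x r))
         \<le> ennreal (4 * r powr (2 - d))"
proof -
  define L where "L = {m\<in>{1..M}. r < dside (q m) \<and> dsq (q m) \<inter> ball x r \<noteq> {}}"
  define t where "t m = ennreal (dside (q m) powr (- d)) * emeasure lebesgue (dsq (q m) \<inter> ball x r)" for m
  have "card L \<le> Suc 0"
  proof (subst card_le_Suc0_iff_eq)
    show "finite L"
      unfolding L_def by simp
    show "\<forall>m\<in>L. \<forall>m'\<in>L. m = m'"
      unfolding L_def using large_square_meeting_ball_unique by blast
  qed
  moreover have "t m \<le> ennreal (4 * r powr (2 - d))" if "m \<in> L" for m
    using that r d_pos unfolding t_def L_def by (intro weighted_emeasure_large_dsq_Int_ball_le) auto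
  ultimately have "sum t L \<le> of_nat (card L) * ennreal (4 * r powr (2 - d))"
    by (intro sum_bounded_above) auto
  also have "\<dots> \<le> 1 * ennreal (4 * r powr (2 - d))"
    using \<open>card L \<le> Suc 0\<close> by (intro mult_right_mono) auto
  finally have "sum t L \<le> ennreal (4 * r powr (2 - d))"
    by simp
  then show ?thesis
    unfolding t_def L_def .
qed

lemma emeasure_ball_le:
  assumes r: "r > 0"
  shows "emeasure \<mu> (ball x r) \<le> ennreal (ball_growth_const d C_P * r powr (2 - d))"
proof -
  define t where "t m = ennreal (dside (q m) powr (- d)) * emeasure lebesgue (dsq (q m) \<inter> ball x r)" for m
  define L where "L = {m\<in>{1..M}. r < dside (q m) \<and> dsq (q m) \<inter> ball x r \<noteq> {}}"
  define S where "S = {m\<in>{1..M}. dside (q m) \<le> r \<and> dsq (q m) \<inter> ball x r \<noteq> {}}"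
  have "emeasure \<mu> (ball x r) = sum t {1..M}"
    unfolding t_def by (rule emeasure_dmu) simp
  also have "\<dots> = sum t (L \<union> S)"
    by (rule sum.mono_neutral_right) (auto simp: t_def L_def S_def)
  also have "\<dots> = sum t L + sum t S"
    by (rule sum.union_disjoint) (auto simp: L_def S_def)
  also have "sum t L \<le> ennreal (4 * r powr (2 - d))"
    unfolding t_def L_def using r by (rule sum_large_squares_meeting_ball_le)
  also have "sum t S \<le> ennreal (9 * \<bar>C_P\<bar> * (2 * r) powr (2 - d))"
  proof -
    have "t m \<le> ennreal (dside (q m) powr (2 - d))" for m
      unfolding t_def by (rule weighted_emeasure_dsq_Int_le)
    then have "sum t S \<le> (\<Sum>m\<in>S. ennreal (dside (q m) powr (2 - d)))"
      by (intro sum_mono)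
    also have "\<dots> = ennreal (\<Sum>m\<in>S. dside (q m) powr (2 - d))"
      by (rule sum_ennreal) simp
    also have "\<dots> \<le> ennreal (9 * \<bar>C_P\<bar> * (2 * r) powr (2 - d))"
      unfolding S_def by (intro ennreal_leI small_squares_meeting_ball_sum_le r)
    finally show ?thesis .
  qed
  also have "ennreal (4 * r powr (2 - d)) + ennreal (9 * \<bar>C_P\<bar> * (2 * r) powr (2 - d))
      = ennreal (ball_growth_const d C_P * r powr (2 - d))"
    using r by (simp add: ball_growth_const_def ennreal_plus[symmetric] powr_mult algebra_simps
        del: ennreal_plus)
  finally show ?thesis
    by (simp add: add_mono)
qed

lemma nn_integral_ball_le_growth_maxfn3:
  assumes "R > 0"
  shows "(\<integral>\<^sup>+ y\<in>ball x R. ennreal (cmod (f y)) \<partial>\<mu>)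
           \<le> ennreal (ball_growth_const d C_P * (3 * R) powr (2 - d)) * maxfn3 \<mu> f x"
proof -
  have growth: "emeasure \<mu> (ball x (3 * R)) \<le> ennreal (ball_growth_const d C_P * (3 * R) powr (2 - d))"
    using emeasure_ball_le assms by simp
  then have "emeasure \<mu> (ball x (3 * R)) < \<infinity>"
    using le_less_trans by fastforce
  then have "(\<integral>\<^sup>+ y\<in>ball x R. ennreal (cmod (f y)) \<partial>\<mu>) \<le> emeasure \<mu> (ball x (3 * R)) * maxfn3 \<mu> f x"
    using assms by (intro nn_integral_ball_le_maxfn3) auto
  also have "\<dots> \<le> ennreal (ball_growth_const d C_P * (3 * R) powr (2 - d)) * maxfn3 \<mu> f x"
    using growth by (intro mult_right_mono) auto
  finally show ?thesis .
qed

lemma Kp_eq_if_nonzero: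
  assumes j: "j \<in> {1..M}" and x: "x \<in> dsq (q j)" and nonzero: "Kp d M q x y \<noteq> 0"
  shows "Kp d M q x y = complex_of_real (dside (q j) powr d) / (x - y)^2" and "y \<notin> dsq4 (q j)"
proof -
  obtain i where i: "i \<in> {1..M}" and "(\<Sum>j'\<in>{1..M}. if i \<noteq> j' \<and> y \<in> dsq (q i) \<and> x \<in> dsq (q j')
      then complex_of_real (dside (q j') powr d) / (x - y)^2 else 0) \<noteq> 0"
    using nonzero unfolding Kp_def by (rule sum.not_neutral_contains_not_neutral)
  from this(2) obtain j' where "j' \<in> {1..M}" "(if i \<noteq> j' \<and> y \<in> dsq (q i) \<and> x \<in> dsq (q j')
      then complex_of_real (dside (q j') powr d) / (x - y)^2 else 0) \<noteq> 0"
    by (rule sum.not_neutral_contains_not_neutral)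
  then have "j' \<in> {1..M}" "i \<noteq> j'" "y \<in> dsq (q i)" "x \<in> dsq (q j')"
    by (auto split: if_splits)
  then have y: "y \<in> dsq (q i)" and "i \<noteq> j"
    using square_index_unique[OF _ j _ x] by auto
  then show "y \<notin> dsq4 (q j)"
    using separated[OF i j] dsq_subset_dsq4[of "q i"] by blast
  have "Kp d M q x y = (\<Sum>i'\<in>{1..M}. \<Sum>j'\<in>{1..M}.
      if i' = i \<and> j' = j then complex_of_real (dside (q j) powr d) / (x - y)^2 else 0)"
    unfolding Kp_def
  proof (intro sum.cong refl)
    fix i' j'' assume "i' \<in> {1..M}" "j'' \<in> {1..M}"
    then have "(i' \<noteq> j'' \<and> y \<in> dsq (q i') \<and> x \<in> dsq (q j'')) \<longleftrightarrow> i' = i \<and> j'' = j"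
      using square_index_unique[OF _ i _ y] square_index_unique[OF _ j _ x] y x \<open>i \<noteq> j\<close> by blast
    then show "(if i' \<noteq> j'' \<and> y \<in> dsq (q i') \<and> x \<in> dsq (q j'')
        then complex_of_real (dside (q j'') powr d) / (x - y)^2 else 0)
      = (if i' = i \<and> j'' = j then complex_of_real (dside (q j) powr d) / (x - y)^2 else 0)"
      by auto
  qed
  also have "\<dots> = complex_of_real (dside (q j) powr d) / (x - y)^2"
  proof -
    have "(\<Sum>j'\<in>{1..M}. if i' = i \<and> j' = j then complex_of_real (dside (q j) powr d) / (x - y)^2 else 0)
        = (if i' = i then complex_of_real (dside (q j) powr d) / (x - y)^2 else 0)" for i'
      using j by (cases "i' = i") simp_all
    then show ?thesis
      using i by simp
  qed
  finally show "Kp d M q x y = complex_of_real (dside (q j) powr d) / (x - y)^2" .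
qed

lemma norm_Kp_le_annuli:
  assumes j: "j \<in> {1..M}" and x: "x \<in> dsq (q j)"
  shows "ennreal (cmod (Kp d M q x y)) \<le>
    (\<Sum>n. ennreal (dside (q j) powr (d - 2) * (1/4)^n) * indicator (ball x (dside (q j) * 2^(n+1))) y)"
proof (cases "Kp d M q x y = 0")
  case True
  then show ?thesis by simp
next
  case False
  define l where "l = dside (q j)"
  have l: "l > 0"
    unfolding l_def by (rule dside_pos)
  have "l \<le> cmod (x - y)"
    unfolding l_def using x Kp_eq_if_nonzero(2)[OF j x False] by (rule dside_le_dist_if_notin_dsq4)
  then obtain n where n: "l * 2^n \<le> cmod (x - y)" "cmod (x - y) < l * 2^(n+1)"
    using exists_dyadic_annulus[OF l] by blast
  have "cmod (Kp d M q x y) = l powr d / (cmod (x - y))\<^sup>2"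
    using Kp_eq_if_nonzero(1)[OF j x False] by (simp add: l_def norm_divide norm_power)
  also have "\<dots> \<le> l powr (d - 2) * (1/4)^n"
    using l n(1) by (rule powr_div_square_le_annulus)
  finally have "cmod (Kp d M q x y) \<le> l powr (d - 2) * (1/4)^n" .
  define a where "a m = ennreal (l powr (d - 2) * (1/4)^m) * indicator (ball x (l * 2^(m+1))) y" for m
  with n(2) have "ennreal (cmod (Kp d M q x y)) \<le> a n"
    using \<open>cmod (Kp d M q x y) \<le> _\<close> by (simp add: dist_norm ennreal_leI)
  also have "\<dots> \<le> (\<Sum>m. a m)"
    using sum_le_suminf[of a "{n}"] by simp
  finally show ?thesis
    unfolding a_def l_def .
qed

lemma nn_integral_Kp_le_annuli:
  assumes f [measurable]: "f \<in> borel_measurable \<mu>" and j: "j \<in> {1..M}" and x: "x \<in> dsq (q j)"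
  shows "(\<integral>\<^sup>+ y. ennreal (cmod (Kp d M q x y) * cmod (f y)) \<partial>\<mu>)
           \<le> (\<Sum>n. ennreal (dside (q j) powr (d - 2) * (1/4)^n) *
                  (\<integral>\<^sup>+ y\<in>ball x (dside (q j) * 2^(n+1)). ennreal (cmod (f y)) \<partial>\<mu>))"
proof -
  define c where "c n = ennreal (dside (q j) powr (d - 2) * (1/4)^n)" for n :: nat
  define B where "B n = ball x (dside (q j) * 2^(n+1))" for n :: nat
  define F where "F y = ennreal (cmod (f y))" for y
  have [measurable]: "F \<in> borel_measurable \<mu>" "B n \<in> sets \<mu>" for n
    unfolding F_def B_def by simp_all
  have "(\<integral>\<^sup>+ y. ennreal (cmod (Kp d M q x y) * cmod (f y)) \<partial>\<mu>)
      \<le> (\<integral>\<^sup>+ y. (\<Sum>n. c n * (F y * indicator (B n) y)) \<partial>\<mu>)"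
  proof (rule nn_integral_mono)
    fix y
    have "ennreal (cmod (Kp d M q x y) * cmod (f y)) = ennreal (cmod (Kp d M q x y)) * F y"
      unfolding F_def by (simp add: ennreal_mult)
    also have "\<dots> \<le> (\<Sum>n. c n * indicator (B n) y) * F y"
      using norm_Kp_le_annuli[OF j x, of y] unfolding c_def B_def by (intro mult_right_mono) auto
    finally show "ennreal (cmod (Kp d M q x y) * cmod (f y)) \<le> (\<Sum>n. c n * (F y * indicator (B n) y))"
      by (simp add: mult_ac flip: ennreal_suminf_multc)
  qed
  also have "\<dots> = (\<Sum>n. c n * (\<integral>\<^sup>+ y\<in>B n. F y \<partial>\<mu>))"
    by (simp add: nn_integral_suminf nn_integral_cmult)
  finally show ?thesis
    unfolding c_def B_def F_def .
qed

lemma nn_integral_Kp_le_maxfn3: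
  assumes f: "f \<in> borel_measurable \<mu>" and j: "j \<in> {1..M}" and x: "x \<in> dsq (q j)"
  shows "(\<integral>\<^sup>+ y. ennreal (cmod (Kp d M q x y) * cmod (f y)) \<partial>\<mu>)
           \<le> ennreal (ball_growth_const d C_P * 6 powr (2 - d) / (1 - 2 powr (- d))) * maxfn3 \<mu> f x"
proof -
  define l where "l = dside (q j)"
  have l: "l > 0"
    unfolding l_def by (rule dside_pos)
  define K where "K = ball_growth_const d C_P"
  have K: "K \<ge> 0"
    unfolding K_def by (rule ball_growth_const_nonneg)
  have "(2::real) powr (- d) < 2 powr 0"
    using d_pos by (intro powr_less_mono) auto
  then have ratio: "0 \<le> (2::real) powr (- d)" "(2::real) powr (- d) < 1"
    by simp_all
  have "(\<integral>\<^sup>+ y. ennreal (cmod (Kp d M q x y) * cmod (f y)) \<partial>\<mu>)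
      \<le> (\<Sum>n. ennreal (l powr (d - 2) * (1/4)^n) * (\<integral>\<^sup>+ y\<in>ball x (l * 2^(n+1)). ennreal (cmod (f y)) \<partial>\<mu>))"
    unfolding l_def by (rule nn_integral_Kp_le_annuli[OF f j x])
  also have "\<dots> \<le> (\<Sum>n. ennreal (l powr (d - 2) * (1/4)^n) *
      (ennreal (K * (3 * (l * 2^(n+1))) powr (2 - d)) * maxfn3 \<mu> f x))"
    unfolding K_def using l by (intro suminf_le mult_left_mono nn_integral_ball_le_growth_maxfn3) auto
  also have "\<dots> = (\<Sum>n. ennreal (K * 6 powr (2 - d) * (2 powr (- d))^n) * maxfn3 \<mu> f x)"
  proof -
    have "ennreal (l powr (d - 2) * (1/4)^n) * ennreal (K * (3 * (l * 2^(n+1))) powr (2 - d))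
        = ennreal (l powr (d - 2) * (1/4)^n * (K * (3 * (l * 2^(n+1))) powr (2 - d)))" for n
      by (rule ennreal_mult[symmetric]) (simp_all add: K)
    then have "ennreal (l powr (d - 2) * (1/4)^n) * ennreal (K * (3 * (l * 2^(n+1))) powr (2 - d))
        = ennreal (K * 6 powr (2 - d) * (2 powr (- d))^n)" for n
      by (simp only: annulus_weight_eq[OF l])
    then show ?thesis
      by (simp only: mult.assoc[symmetric])
  qed
  also have "\<dots> = (\<Sum>n. ennreal (K * 6 powr (2 - d) * (2 powr (- d))^n)) * maxfn3 \<mu> f x"
    by simp
  also have "(\<Sum>n. ennreal (K * 6 powr (2 - d) * (2 powr (- d))^n)) = ennreal (K * 6 powr (2 - d) / (1 - 2 powr (- d)))"
    using K ratio by (intro suminf_ennreal_geometric) auto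
  finally show ?thesis
    unfolding K_def .
qed

end

theorem lemma2:
  fixes d C_P :: real
  assumes "0 < d" and "d < 2"
  shows "\<exists>C::real. \<forall>(M::nat) (q::nat \<Rightarrow> int \<times> int \<times> int).
    (\<forall>m\<in>{1..M}. \<forall>m'\<in>{1..M}. m \<noteq> m' \<longrightarrow> dsq4 (q m) \<inter> dsq4 (q m') = {}) \<and>
    (\<forall>Q. (\<Sum>m\<in>{m\<in>{1..M}. dsq (q m) \<subseteq> dsq Q}. dside (q m) powr (2 - d))
            \<le> C_P * dside Q powr (2 - d))
    \<longrightarrow> (\<forall>f::complex \<Rightarrow> complex. f \<in> borel_measurable (dmu d M q) \<longrightarrow>
         (\<forall>x\<in>(\<Union>m\<in>{1..M}. dsq (q m)).
            ennreal (cmod (\<integral>y. Kp d M q x y * f y \<partial>(dmu d M q)))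
              \<le> (\<integral>\<^sup>+ y. ennreal (cmod (Kp d M q x y) * cmod (f y)) \<partial>(dmu d M q))
          \<and> (\<integral>\<^sup>+ y. ennreal (cmod (Kp d M q x y) * cmod (f y)) \<partial>(dmu d M q))
              \<le> ennreal C * maxfn3 (dmu d M q) f x))"
proof (intro exI allI impI ballI conjI)
  fix M :: nat and q :: "nat \<Rightarrow> int \<times> int \<times> int" and f :: "complex \<Rightarrow> complex" and x
  assume squares: "(\<forall>m\<in>{1..M}. \<forall>m'\<in>{1..M}. m \<noteq> m' \<longrightarrow> dsq4 (q m) \<inter> dsq4 (q m') = {}) \<and>
      (\<forall>Q. (\<Sum>m\<in>{m\<in>{1..M}. dsq (q m) \<subseteq> dsq Q}. dside (q m) powr (2 - d)) \<le> C_P * dside Q powr (2 - d))"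
    and f: "f \<in> borel_measurable (dmu d M q)" and "x \<in> (\<Union>m\<in>{1..M}. dsq (q m))"
  then obtain j where "j \<in> {1..M}" "x \<in> dsq (q j)"
    by blast
  interpret separated_dyadic_squares d C_P M q
    using assms squares by unfold_locales auto
  show "ennreal (cmod (\<integral>y. Kp d M q x y * f y \<partial>(dmu d M q)))
      \<le> (\<integral>\<^sup>+ y. ennreal (cmod (Kp d M q x y) * cmod (f y)) \<partial>(dmu d M q))"
    using norm_integral_le_nn_integral_norm[of "dmu d M q" "\<lambda>y. Kp d M q x y * f y"]
    by (simp add: norm_mult)
  show "(\<integral>\<^sup>+ y. ennreal (cmod (Kp d M q x y) * cmod (f y)) \<partial>(dmu d M q))
      \<le> ennreal (ball_growth_const d C_P * 6 powr (2 - d) / (1 - 2 powr (- d))) * maxfn3 (dmu d M q) f x"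
    by (rule nn_integral_Kp_le_maxfn3) fact+
qed

end
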